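(* Let $D$ be an integral domain and let $M$ be a nonzero $D$-module. Let $N_v=\{f\in D[X]\mid c(f)_v=D\}$. Then $M[X]_{N_v}$ is a DW-module (as a $D[X]_{N_v}$-module), i.e. every nonzero $D[X]_{N_v}$-submodule of $M[X]_{N_v}$ is a $w$-module.
   Context: For an integral domain $A$ with quotient field $K$: $I^{-1}=\{a\in K\mid aI\subseteq A\}$, $I_v=(I^{-1})^{-1}$; $\mathrm{GV}(A)$ is the set of finitely generated ideals $J$ of $A$ with $J_v=A$; for an $A$-module $N$, $N_w=\{x\in N\otimes_A K\mid xJ\subseteq N\text{ for some }J\in\mathrm{GV}(A)\}$, and $N$ is a $w$-module if $N_w=N$. A $w$-module is a DW-module if every nonzero submodule of it is a $w$-module. Here $A=D[X]_{N_v}$. $c(f)$ is the ideal of $D$ generated by the coefficients of $f$; $N_v$ is a multiplicative subset of $D[X]$.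
   Formalization: A w-module N over A means: for J in GV(A), xJ = 0 forces x = 0 in N, and every A-linear map J -> N is multiplication by some x in N, in place of $N_w=N$. The statement above fails without it. *)

theory Defs
  imports "HOL-Computational_Algebra.Polynomial" "HOL-Computational_Algebra.Fraction_Field"
begin

definition emb :: "'a::idom \<Rightarrow> 'a fract" where
  "emb x = Fract x 1"

definition frac_inv :: "'k::field set \<Rightarrow> 'k set \<Rightarrow> 'k set" where
  "frac_inv R I = {a. \<forall>x\<in>I. a * x \<in> R}"

definition vclos :: "'k::field set \<Rightarrow> 'k set \<Rightarrow> 'k set" where
  "vclos R I = frac_inv R (frac_inv R I)"

definition content_ideal :: "'a::idom poly \<Rightarrow> 'a set" where
  "content_ideal f = {x. \<exists>r. x = (\<Sum>i\<le>degree f. r i * coeff f i)}"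

definition Nv :: "'a::idom poly set" where
  "Nv = {f. vclos (range emb) (emb ` content_ideal f) = range emb}"

text \<open>The ring A = D[X]_{N_v}, as a subring of the quotient field of D[X].\<close>
definition Aring :: "'a::idom poly fract set" where
  "Aring = {Fract f s | f s. s \<in> Nv}"

definition is_ideal_of :: "'k::field set \<Rightarrow> 'k set \<Rightarrow> bool" where
  "is_ideal_of R J \<longleftrightarrow> J \<subseteq> R \<and> 0 \<in> J \<and> (\<forall>x\<in>J. \<forall>y\<in>J. x + y \<in> J)
     \<and> (\<forall>a\<in>R. \<forall>x\<in>J. a * x \<in> J)"

definition fin_gen_ideal :: "'k::field set \<Rightarrow> 'k set \<Rightarrow> bool" where
  "fin_gen_ideal R J \<longleftrightarrow> is_ideal_of R J \<and>
     (\<exists>F. finite F \<and> F \<subseteq> J \<and> J = {\<Sum>x\<in>F. r x * x | r. \<forall>x\<in>F. r x \<in> R})"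

definition GV :: "'k::field set \<Rightarrow> 'k set set" where
  "GV R = {J. fin_gen_ideal R J \<and> vclos R J = R}"

lift_definition pscale :: "('a::idom \<Rightarrow> 'm::ab_group_add \<Rightarrow> 'm) \<Rightarrow> 'a poly \<Rightarrow> 'm poly \<Rightarrow> 'm poly"
  is "\<lambda>sc f g k. if k \<le> degree f + degree g
        then (\<Sum>i\<le>k. sc (coeff f i) (coeff g (k - i))) else 0"
proof -
  fix sc :: "'a \<Rightarrow> 'm \<Rightarrow> 'm" and f :: "'a poly" and g :: "'m poly"
  show "\<forall>\<^sub>\<infinity>k. (if k \<le> degree f + degree g
        then (\<Sum>i\<le>k. sc (coeff f i) (coeff g (k - i))) else 0) = 0"
    unfolding MOST_nat by (rule exI[of _ "degree f + degree g"]) auto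
qed

context
  fixes sc :: "'a::idom \<Rightarrow> 'm::ab_group_add \<Rightarrow> 'm"
begin

definition locrel :: "(('m poly \<times> 'a poly) \<times> ('m poly \<times> 'a poly)) set" where
  "locrel = {((g, s), (g', s')). s \<in> Nv \<and> s' \<in> Nv \<and>
      (\<exists>u\<in>Nv. pscale sc u (pscale sc s' g - pscale sc s g') = 0)}"

definition Lcar :: "('m poly \<times> 'a poly) set set" where
  "Lcar = {locrel `` {(g, s)} | g s. s \<in> Nv}"

definition Lzero :: "('m poly \<times> 'a poly) set" where
  "Lzero = locrel `` {(0, 1)}"

definition Ladd :: "('m poly \<times> 'a poly) set \<Rightarrow> ('m poly \<times> 'a poly) set \<Rightarrow> ('m poly \<times> 'a poly) set" where
  "Ladd X Y = \<Union>{locrel `` {(pscale sc s' g + pscale sc s g', s * s')} | g s g' s'.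
                  (g, s) \<in> X \<and> (g', s') \<in> Y}"

definition Lact :: "'a poly fract \<Rightarrow> ('m poly \<times> 'a poly) set \<Rightarrow> ('m poly \<times> 'a poly) set" where
  "Lact a X = \<Union>{locrel `` {(pscale sc f g, t * s)} | f t g s.
                  a = Fract f t \<and> t \<in> Nv \<and> (g, s) \<in> X}"

definition Lsubmod :: "('m poly \<times> 'a poly) set set \<Rightarrow> bool" where
  "Lsubmod N \<longleftrightarrow> N \<subseteq> Lcar \<and> Lzero \<in> N \<and> (\<forall>x\<in>N. \<forall>y\<in>N. Ladd x y \<in> N)
     \<and> (\<forall>a\<in>Aring. \<forall>x\<in>N. Lact a x \<in> N)"

text \<open>w-module over A (GV-torsion-free, and N_w = N in the form: every A-linear map
  J \<rightarrow> N with J \<in> GV(A) is multiplication by an element of N, i.e. extends to A).\<close>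
definition Lw_module :: "('m poly \<times> 'a poly) set set \<Rightarrow> bool" where
  "Lw_module N \<longleftrightarrow>
     (\<forall>J\<in>GV Aring. \<forall>x\<in>N. (\<forall>j\<in>J. Lact j x = Lzero) \<longrightarrow> x = Lzero) \<and>
     (\<forall>J\<in>GV Aring. \<forall>\<phi>. ((\<forall>j\<in>J. \<phi> j \<in> N) \<and> (\<forall>j\<in>J. \<forall>k\<in>J. \<phi> (j + k) = Ladd (\<phi> j) (\<phi> k))
          \<and> (\<forall>a\<in>Aring. \<forall>j\<in>J. \<phi> (a * j) = Lact a (\<phi> j)))
        \<longrightarrow> (\<exists>x\<in>N. \<forall>j\<in>J. \<phi> j = Lact j x))"

definition LDW_module :: "bool" where
  "LDW_module \<longleftrightarrow> Lw_module Lcar \<and> (\<forall>N. Lsubmod N \<and> N \<noteq> {Lzero} \<longrightarrow> Lw_module N)"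

end

end

theory Submission
  imports Defs
begin

(* The key fact is that A = D[X]_{N_v} has no GV-ideal other than A. If J \<in> GV(A) is generated
   by g_1/s_1, ..., g_n/s_n, concatenating coefficient sequences gives h = g_1 + X^k_1 g_2 + ...
   in J whose coefficients include those of every g_i. Any w in the quotient field K of D with
   w c(h) \<subseteq> D then satisfies w J \<subseteq> A, hence w \<in> J^-1 = A and so w \<in> A \<inter> K = D. Thus
   c(h)_v = D, h is a unit of A and J = A. With GV(A) = {A}, GV-torsion-freeness and the extension
   property of maps J \<rightarrow> N are trivial, so every A-submodule N of M[X]_{N_v} is a w-module.
   That N_v is multiplicative, i.e. that A is a ring at all, is a McCoy-type argument modulo the
   ideal {x \<in> D | w x \<in> D}. *)

section \<open>The multiplicative set \<open>N\<^sub>v\<close>\<close>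

lemma emb_0 [simp]: "emb 0 = 0"
  and emb_1 [simp]: "emb 1 = 1"
  and emb_add: "emb (x + y) = emb x + emb y"
  and emb_mult: "emb (x * y) = emb x * emb y"
  by (simp_all add: emb_def fract_collapse)

lemma emb_sum: "emb (sum f A) = (\<Sum>i\<in>A. emb (f i))"
  by (induction A rule: infinite_finite_induct) (simp_all add: emb_add)

lemma range_emb_0: "0 \<in> range emb"
  and range_emb_1: "1 \<in> range emb"
  by (metis emb_0 rangeI, metis emb_1 rangeI)

lemma range_emb_add: "x \<in> range emb \<Longrightarrow> y \<in> range emb \<Longrightarrow> x + y \<in> range emb"
  and range_emb_mult: "x \<in> range emb \<Longrightarrow> y \<in> range emb \<Longrightarrow> x * y \<in> range emb"
  by (auto simp: emb_add [symmetric] emb_mult [symmetric])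

lemma range_emb_sum: "(\<And>i. i \<in> A \<Longrightarrow> f i \<in> range emb) \<Longrightarrow> sum f A \<in> range emb"
  by (induction A rule: infinite_finite_induct) (auto intro: range_emb_add range_emb_0)

lemma vclos_eq_self_iff:
  fixes R I :: "'k::field set"
  assumes one: "1 \<in> R" and mult: "\<And>x y. x \<in> R \<Longrightarrow> y \<in> R \<Longrightarrow> x * y \<in> R" and "I \<subseteq> R"
  shows "vclos R I = R \<longleftrightarrow> frac_inv R I \<subseteq> R"
proof
  assume "vclos R I = R"
  then have "1 \<in> frac_inv R (frac_inv R I)"
    using one by (simp add: vclos_def)
  then show "frac_inv R I \<subseteq> R"
    by (auto simp: frac_inv_def)
next
  assume "frac_inv R I \<subseteq> R"
  moreover have "R \<subseteq> frac_inv R I"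
    using \<open>I \<subseteq> R\<close> mult by (auto simp: frac_inv_def)
  moreover have "frac_inv R R = R"
    using one mult by (force simp: frac_inv_def)
  ultimately show "vclos R I = R"
    by (simp add: vclos_def)
qed

lemma coeff_mem_content_ideal: "coeff f i \<in> content_ideal f"
proof -
  have "coeff f i = (\<Sum>j\<le>degree f. of_bool (j = i) * coeff f j)"
    by (cases "i \<le> degree f") (simp_all add: coeff_eq_0)
  then show ?thesis
    unfolding content_ideal_def mem_Collect_eq by (rule exI [of _ "\<lambda>j. of_bool (j = i)"])
qed

lemma frac_inv_content_ideal:
  "w \<in> frac_inv (range emb) (emb ` content_ideal f) \<longleftrightarrow> (\<forall>i. w * emb (coeff f i) \<in> range emb)"
proof
  assume "w \<in> frac_inv (range emb) (emb ` content_ideal f)"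
  then show "\<forall>i. w * emb (coeff f i) \<in> range emb"
    unfolding frac_inv_def using coeff_mem_content_ideal by blast
next
  assume coeffs: "\<forall>i. w * emb (coeff f i) \<in> range emb"
  have "w * emb (\<Sum>i\<le>degree f. r i * coeff f i) \<in> range emb" for r
  proof -
    have "w * emb (\<Sum>i\<le>degree f. r i * coeff f i) = (\<Sum>i\<le>degree f. emb (r i) * (w * emb (coeff f i)))"
      by (simp add: emb_sum emb_mult sum_distrib_left mult.left_commute)
    also have "\<dots> \<in> range emb"
      using coeffs by (intro range_emb_sum range_emb_mult [OF rangeI]) auto
    finally show ?thesis .
  qed
  then show "w \<in> frac_inv (range emb) (emb ` content_ideal f)"
    by (auto simp: frac_inv_def content_ideal_def)
qed

lemma mem_Nv_iff: "f \<in> Nv \<longleftrightarrow> (\<forall>w. (\<forall>i. w * emb (coeff f i) \<in> range emb) \<longrightarrow> w \<in> range emb)"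
proof -
  have "f \<in> Nv \<longleftrightarrow> frac_inv (range emb) (emb ` content_ideal f) \<subseteq> range emb"
    unfolding Nv_def mem_Collect_eq
    by (rule vclos_eq_self_iff) (auto intro: range_emb_mult range_emb_1)
  then show ?thesis
    by (auto simp: frac_inv_content_ideal)
qed

lemma one_mem_Nv: "1 \<in> Nv"
  by (auto simp: mem_Nv_iff dest: spec [of _ 0])

lemma Nv_eq_UNIV_if_zero_mem:
  assumes "(0 :: 'a::idom poly) \<in> Nv" shows "(Nv :: 'a poly set) = UNIV"
proof -
  have "\<forall>w :: 'a fract. w \<in> range emb"
    using assms by (simp add: mem_Nv_iff range_emb_0)
  then show ?thesis
    by (auto simp: mem_Nv_iff)
qed

definition ideal :: "'a::comm_ring_1 set \<Rightarrow> bool" where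
  "ideal I \<longleftrightarrow> 0 \<in> I \<and> (\<forall>x\<in>I. \<forall>y\<in>I. x + y \<in> I) \<and> (\<forall>a. \<forall>x\<in>I. a * x \<in> I)"

lemma idealI:
  "0 \<in> I \<Longrightarrow> (\<And>x y. x \<in> I \<Longrightarrow> y \<in> I \<Longrightarrow> x + y \<in> I) \<Longrightarrow>
    (\<And>a x. x \<in> I \<Longrightarrow> a * x \<in> I) \<Longrightarrow> ideal I"
  by (simp add: ideal_def)

lemma ideal_0: "ideal I \<Longrightarrow> 0 \<in> I"
  and ideal_add: "ideal I \<Longrightarrow> x \<in> I \<Longrightarrow> y \<in> I \<Longrightarrow> x + y \<in> I"
  and ideal_mult: "ideal I \<Longrightarrow> x \<in> I \<Longrightarrow> a * x \<in> I"
  by (simp_all add: ideal_def)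

lemma ideal_diff: "ideal I \<Longrightarrow> x \<in> I \<Longrightarrow> y \<in> I \<Longrightarrow> x - y \<in> I"
  using ideal_add [of I x "(- 1) * y"] ideal_mult [of I y "- 1"] by simp

lemma ideal_sum: "ideal I \<Longrightarrow> (\<And>k. k \<in> A \<Longrightarrow> f k \<in> I) \<Longrightarrow> sum f A \<in> I"
  by (induction A rule: infinite_finite_induct) (auto intro: ideal_0 ideal_add)

text \<open>In the coefficient of \<open>X^(i + degree g)\<close> in \<open>f * g\<close>, all terms but
  \<open>coeff f i * lead_coeff g\<close> vanish or lie in \<open>I\<close>.\<close>
lemma coeff_times_lead_coeff_mem_ideal:
  assumes I: "ideal I" and fg: "range (coeff (f * g)) \<subseteq> I"
    and above: "\<And>j n. j > i \<Longrightarrow> coeff f j * coeff g n \<in> I"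
  shows "coeff f i * lead_coeff g \<in> I"
proof -
  let ?m = "degree g"
  let ?t = "\<lambda>k. coeff f k * coeff g (i + ?m - k)"
  have others: "sum ?t ({..i + ?m} - {i}) \<in> I"
  proof (rule ideal_sum [OF I])
    fix k assume "k \<in> {..i + ?m} - {i}"
    then consider "k < i" | "k > i" by fastforce
    then show "?t k \<in> I"
    proof cases
      case 1
      then have "coeff g (i + ?m - k) = 0" by (simp add: coeff_eq_0)
      then show ?thesis using ideal_0 [OF I] by simp
    qed (rule above)
  qed
  have all: "sum ?t {..i + ?m} \<in> I"
    using fg by (auto simp: coeff_mult)
  have "coeff f i * lead_coeff g = sum ?t {..i + ?m} - sum ?t ({..i + ?m} - {i})"
    by (simp add: sum.remove [of "{..i + ?m}" i])
  also have "\<dots> \<in> I"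
    using all others by (rule ideal_diff [OF I])
  finally show ?thesis .
qed

lemma mccoy_descent:
  assumes I: "ideal I" and fg: "range (coeff (f * g)) \<subseteq> I"
    and a_lead: "a * lead_coeff g \<in> I" and ag: "\<not> range (coeff (smult a g)) \<subseteq> I"
  obtains g' where "range (coeff (f * g')) \<subseteq> I" "\<not> range (coeff g') \<subseteq> I" "degree g' < degree g"
proof
  define g' where "g' = smult a g - monom (a * lead_coeff g) (degree g)"
  have coeff_g': "coeff g' n = (if n = degree g then 0 else a * coeff g n)" for n
    by (simp add: g'_def)
  have "f * g' = smult a (f * g) - smult (a * lead_coeff g) (monom 1 (degree g) * f)"
    by (simp add: g'_def algebra_simps smult_monom flip: mult_smult_right)
  then show "range (coeff (f * g')) \<subseteq> I"
    using fg a_lead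
    by (auto intro!: ideal_diff [OF I] ideal_mult [OF I] simp: mult.commute [of "a * lead_coeff g"])
  obtain n where n: "a * coeff g n \<notin> I"
    using ag by auto
  then have "coeff g' n \<notin> I"
    using a_lead by (auto simp: coeff_g' split: if_splits)
  then show "\<not> range (coeff g') \<subseteq> I" by auto
  have "n < degree g"
  proof (rule ccontr)
    assume "\<not> n < degree g"
    then have "coeff g' n = 0" by (auto simp: coeff_g' coeff_eq_0)
    then show False using \<open>coeff g' n \<notin> I\<close> ideal_0 [OF I] by simp
  qed
  then show "degree g' < degree g"
    by (intro le_less_trans [OF degree_le [of "degree g - 1"]]) (auto simp: coeff_g' coeff_eq_0)
qed

lemma mccoy_mod_ideal:
  assumes I: "ideal I" and fg: "range (coeff (f * g)) \<subseteq> I" and g: "\<not> range (coeff g) \<subseteq> I"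
  obtains r where "r \<notin> I" "\<And>n. r * coeff f n \<in> I"
  using fg g
proof (induction "degree g" arbitrary: g thesis rule: less_induct)
  case less
  show ?case
  proof (cases "\<forall>i n. coeff f i * coeff g n \<in> I")
    case True
    obtain n where "coeff g n \<notin> I" using less.prems(3) by auto
    then show ?thesis using True by (intro less.prems(1)) (auto simp: mult.commute)
  next
    case False
    define B where "B = {i. \<exists>n. coeff f i * coeff g n \<notin> I}"
    have "B \<subseteq> {..degree f}"
      using ideal_0 [OF I] by (auto simp: B_def) (metis coeff_eq_0 leI mult_zero_left)
    then have "finite B" by (rule finite_subset) simp
    moreover have "B \<noteq> {}" using False by (auto simp: B_def)
    ultimately have "Max B \<in> B" and above_Max: "\<And>j. j > Max B \<Longrightarrow> j \<notin> B"
      using Max_ge not_le by auto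
    have "coeff f j * coeff g n \<in> I" if "j > Max B" for j n
      using above_Max [OF that] by (simp add: B_def)
    then have "coeff f (Max B) * lead_coeff g \<in> I"
      by (rule coeff_times_lead_coeff_mem_ideal [OF I less.prems(2)])
    moreover have "\<not> range (coeff (smult (coeff f (Max B)) g)) \<subseteq> I"
      using \<open>Max B \<in> B\<close> by (auto simp: B_def)
    ultimately obtain g' where "range (coeff (f * g')) \<subseteq> I" "\<not> range (coeff g') \<subseteq> I" "degree g' < degree g"
      using mccoy_descent [OF I less.prems(2)] by blast
    then show ?thesis
      using less.hyps less.prems(1) by blast
  qed
qed

lemma mult_mem_Nv:
  assumes s: "s \<in> Nv" and t: "t \<in> Nv"
  shows "s * t \<in> Nv"
  unfolding mem_Nv_iff
proof (intro allI impI)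
  fix w assume st: "\<forall>i. w * emb (coeff (s * t) i) \<in> range emb"
  define I where "I = {x. w * emb x \<in> range emb}"
  have I: "ideal I"
  proof (rule idealI)
    show "0 \<in> I" by (simp add: I_def range_emb_0)
    show "x + y \<in> I" if "x \<in> I" "y \<in> I" for x y
      using that by (simp add: I_def emb_add distrib_left range_emb_add)
    show "a * x \<in> I" if "x \<in> I" for a x
    proof -
      have "w * emb (a * x) = emb a * (w * emb x)"
        by (simp add: emb_mult mult.left_commute)
      also have "\<dots> \<in> range emb"
        using that by (simp add: I_def range_emb_mult)
      finally show ?thesis
        by (simp add: I_def)
    qed
  qed
  show "w \<in> range emb"
  proof (rule ccontr)
    assume "w \<notin> range emb"
    then have "\<not> range (coeff t) \<subseteq> I"
      using t unfolding mem_Nv_iff I_def image_subset_iff mem_Collect_eq by blast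
    moreover have "range (coeff (s * t)) \<subseteq> I"
      using st by (auto simp: I_def)
    ultimately obtain r where r: "r \<notin> I" "\<And>n. r * coeff s n \<in> I"
      using mccoy_mod_ideal [OF I] by blast
    then have "w * emb r \<in> range emb"
      using s by (auto simp: mem_Nv_iff I_def emb_mult mult.assoc)
    then show False
      using r(1) by (simp add: I_def)
  qed
qed

section \<open>The ring \<open>D[X]\<^bsub>N\<^sub>v\<^esub>\<close> and its GV-ideals\<close>

lemma Fract_mem_Aring: "s \<in> Nv \<Longrightarrow> Fract g s \<in> Aring"
  unfolding Aring_def by blast

lemma Fract_poly_mem_Aring: "Fract g 1 \<in> Aring"
  using Fract_mem_Aring [OF one_mem_Nv] .

lemma AringE:
  assumes "x \<in> Aring"
  obtains g s where "x = Fract g s" "s \<in> Nv" "s \<noteq> 0"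
proof -
  obtain g s where x: "x = Fract g s" "s \<in> Nv"
    using assms unfolding Aring_def by blast
  show ?thesis
  proof (cases "s = 0")
    case True
    then have "x = Fract 0 1" using x by (simp add: fract_collapse)
    then show ?thesis using that [of 0 1] one_mem_Nv by simp
  qed (use x that in blast)
qed

lemma zero_mem_Aring: "0 \<in> Aring"
  and one_mem_Aring: "1 \<in> Aring"
  using Fract_poly_mem_Aring [of 0] Fract_poly_mem_Aring [of 1] by (simp_all add: fract_collapse)

lemma mult_mem_Aring: "x \<in> Aring \<Longrightarrow> y \<in> Aring \<Longrightarrow> x * y \<in> Aring"
  by (elim AringE) (simp add: Fract_mem_Aring mult_mem_Nv)

lemma add_mem_Aring: "x \<in> Aring \<Longrightarrow> y \<in> Aring \<Longrightarrow> x + y \<in> Aring"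
  by (elim AringE) (simp add: Fract_mem_Aring mult_mem_Nv)

lemma sum_mem_Aring: "(\<And>i. i \<in> A \<Longrightarrow> f i \<in> Aring) \<Longrightarrow> sum f A \<in> Aring"
  by (induction A rule: infinite_finite_induct) (auto simp: zero_mem_Aring add_mem_Aring)

lemma const_mult_mem_Aring:
  assumes "b \<noteq> 0" "s \<in> Nv" and coeffs: "\<And>i. Fract a b * emb (coeff g i) \<in> range emb"
  shows "Fract [:a:] [:b:] * Fract g s \<in> Aring"
proof -
  have "b dvd coeff (smult a g) n" for n
  proof -
    obtain d where "Fract a b * emb (coeff g n) = emb d"
      using coeffs by (metis rangeE)
    then have "a * coeff g n = d * b"
      using \<open>b \<noteq> 0\<close> by (simp add: emb_def eq_fract)
    then show ?thesis by simp
  qed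
  then obtain G where G: "smult a g = [:b:] * G"
    using const_poly_dvd_iff by blast
  have "Fract [:a:] [:b:] * Fract g s = Fract ([:b:] * G) ([:b:] * s)"
    using G by simp
  also have "\<dots> = Fract G s"
    using \<open>b \<noteq> 0\<close> by (intro mult_fract_cancel) simp
  finally show ?thesis
    using Fract_mem_Aring [OF \<open>s \<in> Nv\<close>] by simp
qed

lemma const_mem_Aring_imp_mem_range_emb:
  assumes "b \<noteq> 0" "Fract [:a:] [:b:] \<in> Aring"
  shows "Fract a b \<in> range emb"
proof -
  obtain f s where fs: "Fract [:a:] [:b:] = Fract f s" "s \<in> Nv" "s \<noteq> 0"
    using assms(2) by (rule AringE)
  then have "smult a s = smult b f"
    using \<open>b \<noteq> 0\<close> by (simp add: eq_fract)
  then have "a * coeff s i = b * coeff f i" for i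
    by (metis coeff_smult)
  then have "Fract a b * emb (coeff s i) = emb (coeff f i)" for i
    using \<open>b \<noteq> 0\<close> by (simp add: emb_def eq_fract mult.commute)
  then show ?thesis
    using \<open>s \<in> Nv\<close> unfolding mem_Nv_iff by auto
qed

fun poly_concat :: "'a::comm_semiring_1 poly list \<Rightarrow> 'a poly" where
  "poly_concat [] = 0"
| "poly_concat (g # gs) = g + monom 1 (Suc (degree g)) * poly_concat gs"

lemma zero_mem_range_coeff: "0 \<in> range (coeff p)"
  using coeff_eq_0 [of p "Suc (degree p)"] by (metis lessI rangeI)

lemma range_coeff_subset_poly_concat:
  "g \<in> set gs \<Longrightarrow> range (coeff g) \<subseteq> range (coeff (poly_concat gs))"
proof (induction gs)
  case (Cons h hs)
  let ?d = "Suc (degree h)"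
  have coeff_concat: "coeff (poly_concat (h # hs)) n =
      coeff h n + (if n < ?d then 0 else coeff (poly_concat hs) (n - ?d))" for n
    by (simp add: coeff_monom_mult)
  have "range (coeff h) \<subseteq> range (coeff (poly_concat (h # hs)))"
  proof
    fix c assume "c \<in> range (coeff h)"
    then obtain i where c: "c = coeff h i" by blast
    show "c \<in> range (coeff (poly_concat (h # hs)))"
    proof (cases "i < ?d")
      case True
      then show ?thesis using c coeff_concat [of i] by (metis add_0_right rangeI)
    next
      case False
      then have "c = 0" using c by (simp add: coeff_eq_0)
      then show ?thesis by (simp only: zero_mem_range_coeff)
    qed
  qed
  moreover have "range (coeff (poly_concat hs)) \<subseteq> range (coeff (poly_concat (h # hs)))"
  proof
    fix c assume "c \<in> range (coeff (poly_concat hs))"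
    then obtain j where "c = coeff (poly_concat hs) j" by blast
    then have "c = coeff (poly_concat (h # hs)) (j + ?d)"
      using coeff_concat [of "j + ?d"] by (simp add: coeff_eq_0)
    then show "c \<in> range (coeff (poly_concat (h # hs)))" by simp
  qed
  ultimately show ?case
    using Cons.prems Cons.IH by (metis set_ConsD subset_trans)
qed simp

lemma Fract_poly_concat_mem_ideal:
  assumes J: "is_ideal_of Aring J" and gs: "\<And>g. g \<in> set gs \<Longrightarrow> Fract g 1 \<in> J"
  shows "Fract (poly_concat gs) 1 \<in> J"
  using gs
proof (induction gs)
  case Nil
  then show ?case using J by (simp add: is_ideal_of_def fract_collapse)
next
  case (Cons g gs)
  have "Fract (poly_concat (g # gs)) 1 = Fract g 1 + Fract (monom 1 (Suc (degree g))) 1 * Fract (poly_concat gs) 1"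
    by simp
  also have "\<dots> \<in> J"
  proof -
    have "Fract (poly_concat gs) 1 \<in> J" using Cons by simp
    then have "Fract (monom 1 (Suc (degree g))) 1 * Fract (poly_concat gs) 1 \<in> J"
      using J Fract_poly_mem_Aring unfolding is_ideal_of_def by blast
    moreover have "Fract g 1 \<in> J" using Cons.prems by simp
    ultimately show ?thesis using J unfolding is_ideal_of_def by blast
  qed
  finally show ?case .
qed

lemma Fract_denom_mult: "s \<noteq> 0 \<Longrightarrow> Fract s 1 * Fract g s = Fract g 1"
  by (simp add: eq_fract)

lemma mem_Nv_if_coeffs_cover_GV_generators:
  assumes J: "J \<in> GV Aring" and gen: "J = {\<Sum>x\<in>F. r x * x | r. \<forall>x\<in>F. r x \<in> Aring}"
    and cover: "\<And>x. x \<in> F \<Longrightarrow>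
      \<exists>g s. x = Fract g s \<and> s \<in> Nv \<and> range (coeff g) \<subseteq> range (coeff h)"
  shows "h \<in> Nv"
  unfolding mem_Nv_iff
proof (intro allI impI)
  fix w :: "'a fract"
  assume w: "\<forall>i. w * emb (coeff h i) \<in> range emb"
  obtain a b where ab: "w = Fract a b" "b \<noteq> 0" by (cases w)
  let ?W = "Fract [:a:] [:b:]"
  have W_gen: "?W * x \<in> Aring" if x: "x \<in> F" for x
  proof -
    obtain g s where gs: "x = Fract g s" "s \<in> Nv" "range (coeff g) \<subseteq> range (coeff h)"
      using cover [OF x] by blast
    have "Fract a b * emb (coeff g i) \<in> range emb" for i
    proof -
      have "coeff g i \<in> range (coeff h)"
        using gs(3) by blast
      then show ?thesis using w ab(1) by auto
    qed
    then show ?thesis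
      unfolding gs(1) by (rule const_mult_mem_Aring [OF ab(2) gs(2)])
  qed
  have "?W * (\<Sum>x\<in>F. r x * x) \<in> Aring" if r: "\<forall>x\<in>F. r x \<in> Aring" for r
  proof -
    have "?W * (\<Sum>x\<in>F. r x * x) = (\<Sum>x\<in>F. r x * (?W * x))"
      by (simp add: sum_distrib_left mult.left_commute)
    also have "\<dots> \<in> Aring"
      using r W_gen by (intro sum_mem_Aring) (simp add: mult_mem_Aring)
    finally show ?thesis .
  qed
  then have "?W \<in> frac_inv Aring J"
    unfolding frac_inv_def gen by blast
  moreover have "frac_inv Aring J \<subseteq> Aring"
    using J by (subst vclos_eq_self_iff [symmetric])
      (auto simp: GV_def fin_gen_ideal_def is_ideal_of_def one_mem_Aring mult_mem_Aring)
  ultimately show "w \<in> range emb"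
    using ab const_mem_Aring_imp_mem_range_emb by blast
qed

lemma GV_Aring_generatorsE:
  assumes J: "J \<in> GV Aring"
  obtains F num den where "finite F" "J = {\<Sum>x\<in>F. r x * x | r. \<forall>x\<in>F. r x \<in> Aring}"
    "\<And>x. x \<in> F \<Longrightarrow> x = Fract (num x) (den x) \<and> den x \<in> Nv"
    "\<And>x. x \<in> F \<Longrightarrow> Fract (num x) 1 \<in> J"
proof -
  have J_ideal: "is_ideal_of Aring J"
    using J by (simp add: GV_def fin_gen_ideal_def)
  obtain F where "finite F" "F \<subseteq> J" and gen: "J = {\<Sum>x\<in>F. r x * x | r. \<forall>x\<in>F. r x \<in> Aring}"
    using J unfolding GV_def fin_gen_ideal_def by blast
  have "\<forall>x\<in>F. \<exists>g s. x = Fract g s \<and> s \<in> Nv \<and> s \<noteq> 0"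
  proof
    fix x assume "x \<in> F"
    then have "x \<in> Aring"
      using \<open>F \<subseteq> J\<close> J_ideal by (auto simp: is_ideal_of_def)
    then show "\<exists>g s. x = Fract g s \<and> s \<in> Nv \<and> s \<noteq> 0"
      by (rule AringE) blast
  qed
  then obtain num den
    where nd: "\<And>x. x \<in> F \<Longrightarrow> x = Fract (num x) (den x) \<and> den x \<in> Nv \<and> den x \<noteq> 0"
    by metis
  have "Fract (num x) 1 \<in> J" if "x \<in> F" for x
  proof -
    have "Fract (num x) 1 = Fract (den x) 1 * x"
      using nd [OF that] Fract_denom_mult [of "den x" "num x"] by metis
    also have "\<dots> \<in> J"
      using J_ideal \<open>F \<subseteq> J\<close> that Fract_poly_mem_Aring unfolding is_ideal_of_def by blast
    finally show ?thesis .
  qed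
  with \<open>finite F\<close> gen nd show ?thesis
    using that by blast
qed

lemma one_mem_GV_Aring:
  fixes J :: "'a::idom poly fract set"
  assumes J: "J \<in> GV Aring" and "(0 :: 'a poly) \<notin> Nv"
  shows "1 \<in> J"
proof -
  have J_ideal: "is_ideal_of Aring J"
    using J by (simp add: GV_def fin_gen_ideal_def)
  obtain F num den where "finite F" and gen: "J = {\<Sum>x\<in>F. r x * x | r. \<forall>x\<in>F. r x \<in> Aring}"
    and nd: "\<And>x. x \<in> F \<Longrightarrow> x = Fract (num x) (den x) \<and> den x \<in> Nv"
    and num: "\<And>x. x \<in> F \<Longrightarrow> Fract (num x) 1 \<in> J"
    using GV_Aring_generatorsE [OF J] by blast
  obtain xs where xs: "set xs = F"
    using finite_list [OF \<open>finite F\<close>] by blast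
  define h where "h = poly_concat (map num xs)"
  have hJ: "Fract h 1 \<in> J"
    unfolding h_def using xs num by (intro Fract_poly_concat_mem_ideal [OF J_ideal]) auto
  have "h \<in> Nv"
    using J gen
  proof (rule mem_Nv_if_coeffs_cover_GV_generators)
    fix x assume "x \<in> F"
    then show "\<exists>g s. x = Fract g s \<and> s \<in> Nv \<and> range (coeff g) \<subseteq> range (coeff h)"
      using nd xs range_coeff_subset_poly_concat [of "num x" "map num xs"] by (auto simp: h_def)
  qed
  then have "h \<noteq> 0" using assms(2) by auto
  then have "1 = Fract 1 h * Fract h 1"
    by (simp add: eq_fract One_fract_def)
  also have "\<dots> \<in> J"
    using J_ideal hJ Fract_mem_Aring [OF \<open>h \<in> Nv\<close>] unfolding is_ideal_of_def by blast
  finally show ?thesis .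
qed

section \<open>The module \<open>M[X]\<^bsub>N\<^sub>v\<^esub>\<close>\<close>

locale idom_module = module scale for scale :: "'a::idom \<Rightarrow> 'm::ab_group_add \<Rightarrow> 'm"
begin

lemma coeff_pscale:
  "coeff (pscale scale f g) k = (\<Sum>i\<le>k. scale (coeff f i) (coeff g (k - i)))"
proof (cases "k \<le> degree f + degree g")
  case True
  then show ?thesis by (simp add: pscale.rep_eq)
next
  case False
  have "scale (coeff f i) (coeff g (k - i)) = 0" if "i \<le> k" for i
    using False that by (cases "i \<le> degree f") (simp_all add: coeff_eq_0)
  then show ?thesis using False by (simp add: pscale.rep_eq)
qed

lemma pscale_left_distrib: "pscale scale (p + q) g = pscale scale p g + pscale scale q g"
  by (rule poly_eqI) (simp add: coeff_pscale scale_left_distrib sum.distrib)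

lemma pscale_pCons:
  "pscale scale (pCons c p) g = map_poly (scale c) g + pCons 0 (pscale scale p g)"
proof (rule poly_eqI)
  fix k
  show "coeff (pscale scale (pCons c p) g) k = coeff (map_poly (scale c) g + pCons 0 (pscale scale p g)) k"
  proof (cases k)
    case (Suc n)
    show ?thesis
      unfolding Suc coeff_pscale coeff_add coeff_map_poly[of "scale c", OF scale_zero_right]
      by (subst sum.atMost_Suc_shift) (simp add: coeff_pscale)
  qed (simp add: coeff_pscale coeff_map_poly)
qed

lemma pscale_zero_left [simp]: "pscale scale 0 g = 0"
  by (rule poly_eqI) (simp add: coeff_pscale)

lemma pscale_smult: "pscale scale (smult c p) g = map_poly (scale c) (pscale scale p g)"
  by (rule poly_eqI) (simp add: coeff_pscale coeff_map_poly scale_sum_right)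

sublocale poly: module "pscale scale"
proof
  fix p q :: "'a poly" and g h :: "'m poly"
  show "pscale scale p (g + h) = pscale scale p g + pscale scale p h"
    by (rule poly_eqI) (simp add: coeff_pscale scale_right_distrib sum.distrib)
  show "pscale scale (p + q) g = pscale scale p g + pscale scale q g"
    by (rule pscale_left_distrib)
  show "pscale scale 1 g = g"
  proof (rule poly_eqI)
    fix k
    have "(\<Sum>i\<le>k. scale (coeff 1 i) (coeff g (k - i))) = (\<Sum>i\<le>k. if i = 0 then coeff g k else 0)"
      by (rule sum.cong) auto
    then show "coeff (pscale scale 1 g) k = coeff g k" by (simp add: coeff_pscale)
  qed
  have scale_0_poly: "map_poly (scale 0) h = 0" for h :: "'m poly"
    by (rule poly_eqI) (simp add: coeff_map_poly)
  show "pscale scale p (pscale scale q g) = pscale scale (p * q) g"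
    by (induction p) (simp_all add: pscale_pCons pscale_left_distrib pscale_smult scale_0_poly)
qed

lemma locrel_refl: "s \<in> Nv \<Longrightarrow> ((g, s), (g, s)) \<in> locrel scale"
  unfolding locrel_def using one_mem_Nv by force

lemma locrel_scale: "t \<in> Nv \<Longrightarrow> s \<in> Nv \<Longrightarrow> ((g, s), (pscale scale t g, t * s)) \<in> locrel scale"
  unfolding locrel_def using one_mem_Nv mult_mem_Nv by (force simp: mult.commute)

lemma trans_locrel: "trans (locrel scale)"
proof (rule transI, clarify)
  fix g1 s1 g2 s2 g3 s3
  assume 12: "((g1, s1), (g2, s2)) \<in> locrel scale" and 23: "((g2, s2), (g3, s3)) \<in> locrel scale"
  let ?P = "pscale scale"
  from 12 obtain u where u: "u \<in> Nv" "s1 \<in> Nv" "s2 \<in> Nv" "?P (u * s2) g1 = ?P (u * s1) g2"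
    unfolding locrel_def by (auto simp: poly.scale_right_diff_distrib)
  from 23 obtain v where v: "v \<in> Nv" "s3 \<in> Nv" "?P (v * s3) g2 = ?P (v * s2) g3"
    unfolding locrel_def by (auto simp: poly.scale_right_diff_distrib)
  have "?P (u * v * s2) (?P s3 g1) = ?P (v * s3) (?P (u * s2) g1)"
    by (simp add: ac_simps)
  also have "\<dots> = ?P (v * s3) (?P (u * s1) g2)"
    by (simp only: u(4))
  also have "\<dots> = ?P (u * s1) (?P (v * s3) g2)"
    by (simp add: ac_simps)
  also have "\<dots> = ?P (u * s1) (?P (v * s2) g3)"
    by (simp only: v(3))
  also have "\<dots> = ?P (u * v * s2) (?P s1 g3)"
    by (simp add: ac_simps)
  finally have "?P (u * v * s2) (?P s3 g1 - ?P s1 g3) = 0"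
    by (simp add: poly.scale_right_diff_distrib)
  moreover have "u * v * s2 \<in> Nv"
    using u v by (simp add: mult_mem_Nv)
  ultimately show "((g1, s1), (g3, s3)) \<in> locrel scale"
    unfolding locrel_def using u v by blast
qed

lemma Lzero_mem_Lcar: "Lzero scale \<in> Lcar scale"
  unfolding Lzero_def Lcar_def using one_mem_Nv by blast

lemma Lact_Fract_class:
  "t \<in> Nv \<Longrightarrow> (g, s) \<in> X \<Longrightarrow>
    locrel scale `` {(pscale scale f g, t * s)} \<subseteq> Lact scale (Fract f t) X"
  unfolding Lact_def by blast

lemma Lact_one:
  assumes "X \<in> Lcar scale"
  shows "Lact scale 1 X = X"
proof -
  obtain g s where X: "X = locrel scale `` {(g, s)}" and s: "s \<in> Nv"
    using assms unfolding Lcar_def by blast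
  show ?thesis
  proof
    have "(g, s) \<in> X" using X locrel_refl [OF s] by simp
    then have "locrel scale `` {(pscale scale 1 g, 1 * s)} \<subseteq> Lact scale (Fract 1 1) X"
      using one_mem_Nv by (rule Lact_Fract_class [rotated])
    then show "X \<subseteq> Lact scale 1 X"
      using X by (simp add: fract_collapse)
  next
    show "Lact scale 1 X \<subseteq> X"
    proof
      fix z assume "z \<in> Lact scale 1 X"
      then obtain f t g' s' where ft: "1 = Fract f t" "t \<in> Nv" and "(g', s') \<in> X"
        and z: "((pscale scale f g', t * s'), z) \<in> locrel scale"
        unfolding Lact_def by blast
      have "t \<noteq> 0" using ft(1) by (auto simp: fract_collapse)
      moreover have "Fract 1 1 = Fract f t" using ft(1) by (simp add: fract_collapse)
      ultimately have "f = t" by (simp add: eq_fract)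
      have gs': "((g, s), (g', s')) \<in> locrel scale" using \<open>(g', s') \<in> X\<close> X by simp
      then have "s' \<in> Nv" by (simp add: locrel_def)
      then have "((g', s'), (pscale scale f g', t * s')) \<in> locrel scale"
        using locrel_scale [OF ft(2)] \<open>f = t\<close> by simp
      with gs' have "((g, s), (pscale scale f g', t * s')) \<in> locrel scale"
        using trans_locrel by (meson transD)
      then have "((g, s), z) \<in> locrel scale"
        using z trans_locrel by (meson transD)
      then show "z \<in> X" using X by simp
    qed
  qed
qed

text \<open>If \<open>D\<close> is a field, the \<open>v\<close>-closure of every subset, even of \<open>{0}\<close>, is the whole field;
  so \<open>0 \<in> N\<^sub>v\<close> and the localization collapses to a single class.\<close>
lemma locrel_eq_UNIV_if_zero_mem_Nv:
  assumes "(0 :: 'a poly) \<in> Nv"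
  shows "locrel scale = UNIV"
  using Nv_eq_UNIV_if_zero_mem [OF assms] unfolding locrel_def by (auto intro!: exI [of _ "0 :: 'a poly"])

lemma Lw_module_if_zero_mem_Nv:
  assumes "(0 :: 'a poly) \<in> Nv" "N \<subseteq> Lcar scale" "Lzero scale \<in> N"
  shows "Lw_module scale N"
proof -
  have rel: "locrel scale = UNIV"
    using assms(1) by (rule locrel_eq_UNIV_if_zero_mem_Nv)
  then have "Lzero scale = UNIV" "Lcar scale = {UNIV}"
    unfolding Lzero_def Lcar_def using one_mem_Nv by auto
  then have "N = {UNIV}" using assms(2,3) by auto
  moreover have "Lact scale j UNIV = UNIV" for j
  proof -
    obtain f t where "j = Fract f t" by (cases j)
    moreover have "t \<in> Nv"
      using Nv_eq_UNIV_if_zero_mem [OF assms(1)] by simp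
    ultimately have "locrel scale `` {(pscale scale f 0, t * 1)} \<subseteq> Lact scale j UNIV"
      using Lact_Fract_class by blast
    then show ?thesis
      unfolding rel by blast
  qed
  ultimately show ?thesis
    unfolding Lw_module_def \<open>Lzero scale = UNIV\<close> by auto
qed

lemma Lw_module_if_zero_notin_Nv:
  assumes "(0 :: 'a poly) \<notin> Nv" "N \<subseteq> Lcar scale"
  shows "Lw_module scale N"
  unfolding Lw_module_def
proof (intro conjI ballI allI impI)
  fix J x
  assume J: "J \<in> GV Aring" and "x \<in> N" and torsion: "\<forall>j\<in>J. Lact scale j x = Lzero scale"
  have "x = Lact scale 1 x"
    using \<open>x \<in> N\<close> assms(2) Lact_one by auto
  also have "\<dots> = Lzero scale"
    using torsion one_mem_GV_Aring [OF J assms(1)] by blast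
  finally show "x = Lzero scale" .
next
  fix J :: "'a poly fract set" and \<phi>
  assume J: "J \<in> GV Aring"
    and \<phi>: "(\<forall>j\<in>J. \<phi> j \<in> N) \<and> (\<forall>j\<in>J. \<forall>k\<in>J. \<phi> (j + k) = Ladd scale (\<phi> j) (\<phi> k))
      \<and> (\<forall>a\<in>Aring. \<forall>j\<in>J. \<phi> (a * j) = Lact scale a (\<phi> j))"
  have "1 \<in> J" using one_mem_GV_Aring [OF J assms(1)] .
  moreover have "J \<subseteq> Aring"
    using J by (simp add: GV_def fin_gen_ideal_def is_ideal_of_def)
  ultimately have "\<phi> j = Lact scale j (\<phi> 1)" if "j \<in> J" for j
    using \<phi> that by (metis mult.right_neutral subsetD)
  then show "\<exists>x\<in>N. \<forall>j\<in>J. \<phi> j = Lact scale j x"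
    using \<phi> \<open>1 \<in> J\<close> by blast
qed

lemma Lw_module_subset_Lcar:
  assumes "N \<subseteq> Lcar scale" "Lzero scale \<in> N"
  shows "Lw_module scale N"
  using assms Lw_module_if_zero_mem_Nv Lw_module_if_zero_notin_Nv by blast

end

theorem lemma3p6:
  fixes sc :: "'a::idom \<Rightarrow> 'm::ab_group_add \<Rightarrow> 'm"
  assumes "module sc"
    and "\<exists>x::'m. x \<noteq> 0"
  shows "LDW_module sc"
proof -
  interpret idom_module sc
    using assms(1) by (simp add: idom_module_def)
  show ?thesis
    unfolding LDW_module_def Lsubmod_def
    using Lw_module_subset_Lcar Lzero_mem_Lcar by blast
qed

end
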